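(* Let $A$ be an associative algebra and $\{ N_\alpha : A \to A \}_{\alpha \in \Omega}$ a Nijenhuis family. Then $(A, \{ \prec_\alpha, \succ_\alpha, \curlyvee_{\alpha, \beta} \}_{\alpha, \beta \in \Omega})$ is an NS-family algebra, where $a \prec_\alpha b := a \cdot N_\alpha (b)$, $a \succ_\alpha b := N_\alpha (a) \cdot b$ and $a \curlyvee_{\alpha, \beta} b := - N_{\alpha \beta} (a \cdot b)$.
   Context: $\Omega$ is a semigroup. A Nijenhuis family is a collection of linear maps $N_\alpha:A\to A$ with $N_\alpha(a) \cdot N_\beta(b) = N_{\alpha \beta} \big( N_\alpha (a) \cdot b + a \cdot N_\beta(b) - N_{\alpha \beta}(a \cdot b) \big)$ for all $a,b,\alpha,\beta$. An NS-family algebra is a vector space $D$ with bilinear maps $\{ \prec_\alpha, \succ_\alpha, \curlyvee_{\alpha, \beta}\}_{\alpha, \beta \in \Omega}$ such that for all $x,y,z$, $\alpha,\beta,\gamma$: (1) $(x \prec_\alpha y) \prec_\beta z = x \prec_{\alpha \beta} ( y \prec_\beta z + y \succ_\alpha z + y \curlyvee_{\alpha, \beta} z)$; (2) $(x \succ_\alpha y) \prec_\beta z = x \succ_\alpha (y \prec_\beta z)$; (3) $(x \prec_\beta y + x \succ_\alpha y + x \curlyvee_{\alpha, \beta} y) \succ_{\alpha \beta} z = x \succ_\alpha (y \succ_\beta z)$; (4) $( x \prec_\beta y + x \succ_\alpha y + x \curlyvee_{\alpha, \beta} y ) \curlyvee_{\alpha \beta, \gamma} z + (x \curlyvee_{\alpha,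 \beta} y) \prec_\gamma z = x \succ_\alpha (y \curlyvee_{\beta, \gamma} z) + x \curlyvee_{\alpha, \beta \gamma} ( y \prec_\gamma z + y \succ_\beta z + y \curlyvee_{\beta, \gamma} z )$. *)

theory Defs
  imports Main "HOL.Vector_Spaces"
begin

definition assoc_algebra :: "('k::field \<Rightarrow> 'a::ring \<Rightarrow> 'a) \<Rightarrow> bool" where
  "assoc_algebra scale \<longleftrightarrow> Vector_Spaces.vector_space scale \<and>
     (\<forall>c a b. scale c (a * b) = scale c a * b \<and> scale c (a * b) = a * scale c b)"

definition bilinear_map :: "('k::field \<Rightarrow> 'v::ab_group_add \<Rightarrow> 'v) \<Rightarrow> ('v \<Rightarrow> 'v \<Rightarrow> 'v) \<Rightarrow> bool" where
  "bilinear_map scale f \<longleftrightarrow>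
     (\<forall>x. Vector_Spaces.linear scale scale (f x)) \<and>
     (\<forall>y. Vector_Spaces.linear scale scale (\<lambda>x. f x y))"

definition nijenhuis_family ::
  "('k::field \<Rightarrow> 'a::ring \<Rightarrow> 'a) \<Rightarrow> ('w::semigroup_mult \<Rightarrow> 'a \<Rightarrow> 'a) \<Rightarrow> bool" where
  "nijenhuis_family scale N \<longleftrightarrow>
     (\<forall>\<alpha>. Vector_Spaces.linear scale scale (N \<alpha>)) \<and>
     (\<forall>\<alpha> \<beta> a b. N \<alpha> a * N \<beta> b =
        N (\<alpha> * \<beta>) (N \<alpha> a * b + a * N \<beta> b - N (\<alpha> * \<beta>) (a * b)))"

definition NS_family_algebra ::
  "('k::field \<Rightarrow> 'v::ab_group_add \<Rightarrow> 'v) \<Rightarrow> ('w::semigroup_mult \<Rightarrow> 'v \<Rightarrow> 'v \<Rightarrow> 'v)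
   \<Rightarrow> ('w \<Rightarrow> 'v \<Rightarrow> 'v \<Rightarrow> 'v) \<Rightarrow> ('w \<Rightarrow> 'w \<Rightarrow> 'v \<Rightarrow> 'v \<Rightarrow> 'v) \<Rightarrow> bool" where
  "NS_family_algebra scale prec succ curly \<longleftrightarrow>
     Vector_Spaces.vector_space scale \<and>
     (\<forall>\<alpha>. bilinear_map scale (prec \<alpha>)) \<and>
     (\<forall>\<alpha>. bilinear_map scale (succ \<alpha>)) \<and>
     (\<forall>\<alpha> \<beta>. bilinear_map scale (curly \<alpha> \<beta>)) \<and>
     (\<forall>x y z \<alpha> \<beta>. prec \<beta> (prec \<alpha> x y) z =
        prec (\<alpha> * \<beta>) x (prec \<beta> y z + succ \<alpha> y z + curly \<alpha> \<beta> y z)) \<and>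
     (\<forall>x y z \<alpha> \<beta>. prec \<beta> (succ \<alpha> x y) z = succ \<alpha> x (prec \<beta> y z)) \<and>
     (\<forall>x y z \<alpha> \<beta>. succ (\<alpha> * \<beta>) (prec \<beta> x y + succ \<alpha> x y + curly \<alpha> \<beta> x y) z =
        succ \<alpha> x (succ \<beta> y z)) \<and>
     (\<forall>x y z \<alpha> \<beta> \<gamma>.
        curly (\<alpha> * \<beta>) \<gamma> (prec \<beta> x y + succ \<alpha> x y + curly \<alpha> \<beta> x y) z
          + prec \<gamma> (curly \<alpha> \<beta> x y) z =
        succ \<alpha> x (curly \<beta> \<gamma> y z)
          + curly \<alpha> (\<beta> * \<gamma>) x (prec \<gamma> y z + succ \<beta> y z + curly \<beta> \<gamma> y z))"

end

theory Submission
  imports Defs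
begin

text \<open>
  The three operations split the Nijenhuis deformed product
  \<open>a \<cdot>\<^sub>\<alpha>\<^sub>\<beta> b = N\<^sub>\<alpha> a \<cdot> b + a \<cdot> N\<^sub>\<beta> b - N\<^sub>\<alpha>\<^sub>\<beta> (a \<cdot> b)\<close>
  into its three summands, and the Nijenhuis identity says
  \<open>N\<^sub>\<alpha> a \<cdot> N\<^sub>\<beta> b = N\<^sub>\<alpha>\<^sub>\<beta> (a \<cdot>\<^sub>\<alpha>\<^sub>\<beta> b)\<close>.
  Hence the first three NS axioms are associativity of \<open>A\<close>, read through this identity
  where needed.
  For the fourth, expanding the two products of \<open>N\<close>-values by the identity turns both
  sides into
  \<open>- N\<^sub>\<alpha>\<^sub>\<beta>\<^sub>\<gamma> (x N\<^sub>\<beta>(y) z + N\<^sub>\<alpha>(x) y z + x y N\<^sub>\<gamma>(z) - N\<^sub>\<alpha>\<^sub>\<beta>\<^sub>\<gamma>(x y z))\<close>.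
  Bilinearity of the operations is inherited from the product and the linear maps \<open>N\<^sub>\<alpha>\<close>.
\<close>

lemma assoc_algebra_bilinear_mult:
  assumes "assoc_algebra scale"
  shows "bilinear_map scale (*)"
  using assms
  unfolding assoc_algebra_def bilinear_map_def linear_iff
  by (metis distrib_left distrib_right)

lemma bilinear_map_compose_left:
  assumes "bilinear_map scale f" and "Vector_Spaces.linear scale scale g"
  shows "bilinear_map scale (\<lambda>x y. f (g x) y)"
  using assms Vector_Spaces.linear_compose[OF assms(2)]
  unfolding bilinear_map_def comp_def by blast

lemma bilinear_map_compose_right:
  assumes "bilinear_map scale f" and "Vector_Spaces.linear scale scale g"
  shows "bilinear_map scale (\<lambda>x y. f x (g y))"
  using assms Vector_Spaces.linear_compose[OF assms(2)]
  unfolding bilinear_map_def comp_def by blast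

lemma bilinear_map_compose_outer:
  assumes "Vector_Spaces.linear scale scale g" and "bilinear_map scale f"
  shows "bilinear_map scale (\<lambda>x y. g (f x y))"
  using assms Vector_Spaces.linear_compose[OF _ assms(1)]
  unfolding bilinear_map_def comp_def by blast

lemma linear_uminus_compose:
  assumes "Vector_Spaces.linear scale scale g"
  shows "Vector_Spaces.linear scale scale (\<lambda>x. - g x)"
proof -
  interpret vector_space scale
    using assms by (simp add: linear_iff)
  show ?thesis
    using Vector_Spaces.linear_compose[OF assms linear_uminus] by (simp add: comp_def)
qed

locale nijenhuis_ring_family =
  fixes N :: "'w::semigroup_mult \<Rightarrow> 'a::ring \<Rightarrow> 'a"
  assumes additive: "additive (N \<alpha>)"
    and nijenhuis: "N \<alpha> a * N \<beta> b = N (\<alpha> * \<beta>) (N \<alpha> a * b + a * N \<beta> b - N (\<alpha> * \<beta>) (a * b))"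
begin

lemma N_add: "N \<alpha> (x + y) = N \<alpha> x + N \<alpha> y"
  using additive by (rule additive.add)

lemma N_diff: "N \<alpha> (x - y) = N \<alpha> x - N \<alpha> y"
  using additive by (rule additive.diff)

lemma N_minus: "N \<alpha> (- x) = - N \<alpha> x"
  using additive by (rule additive.minus)

lemma nijenhuis_NS_form:
  "N \<alpha> a * N \<beta> b = N (\<alpha> * \<beta>) (a * N \<beta> b + N \<alpha> a * b + - N (\<alpha> * \<beta>) (a * b))"
  using nijenhuis[of \<alpha> a \<beta> b] by (simp add: algebra_simps)

lemma NS_prec_prec:
  "x * N \<alpha> y * N \<beta> z = x * N (\<alpha> * \<beta>) (y * N \<beta> z + N \<alpha> y * z + - N (\<alpha> * \<beta>) (y * z))"
  by (simp only: mult.assoc nijenhuis_NS_form)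

lemma NS_succ_succ:
  "N (\<alpha> * \<beta>) (x * N \<beta> y + N \<alpha> x * y + - N (\<alpha> * \<beta>) (x * y)) * z = N \<alpha> x * (N \<beta> y * z)"
  by (simp only: mult.assoc[symmetric] nijenhuis_NS_form)

lemma NS_curly:
  "- N (\<alpha> * \<beta> * \<gamma>) ((x * N \<beta> y + N \<alpha> x * y + - N (\<alpha> * \<beta>) (x * y)) * z)
     + - N (\<alpha> * \<beta>) (x * y) * N \<gamma> z
   = N \<alpha> x * - N (\<beta> * \<gamma>) (y * z)
     + - N (\<alpha> * (\<beta> * \<gamma>)) (x * (y * N \<gamma> z + N \<beta> y * z + - N (\<beta> * \<gamma>) (y * z)))"
  (is "?lhs = ?rhs")
proof -
  define T where "T = x * (N \<beta> y * z) + N \<alpha> x * (y * z) + x * (y * N \<gamma> z)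
    - N (\<alpha> * (\<beta> * \<gamma>)) (x * (y * z))"
  have left: "N (\<alpha> * \<beta>) (x * y) * N \<gamma> z = N (\<alpha> * (\<beta> * \<gamma>))
      (N (\<alpha> * \<beta>) (x * y) * z + x * (y * N \<gamma> z) - N (\<alpha> * (\<beta> * \<gamma>)) (x * (y * z)))"
    using nijenhuis[of "\<alpha> * \<beta>" "x * y" \<gamma> z] by (simp add: mult.assoc)
  have right: "N \<alpha> x * N (\<beta> * \<gamma>) (y * z) = N (\<alpha> * (\<beta> * \<gamma>))
      (N \<alpha> x * (y * z) + x * N (\<beta> * \<gamma>) (y * z) - N (\<alpha> * (\<beta> * \<gamma>)) (x * (y * z)))"
    using nijenhuis[of \<alpha> x "\<beta> * \<gamma>" "y * z"] .
  have "?lhs = - N (\<alpha> * (\<beta> * \<gamma>)) T"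
    by (simp add: T_def left N_add N_diff N_minus algebra_simps)
  moreover have "?rhs = - N (\<alpha> * (\<beta> * \<gamma>)) T"
    by (simp add: T_def right N_add N_diff N_minus algebra_simps)
  ultimately show ?thesis by simp
qed

end

lemma nijenhuis_family_imp_nijenhuis_ring_family:
  assumes "nijenhuis_family scale N"
  shows "nijenhuis_ring_family N"
  using assms unfolding nijenhuis_family_def nijenhuis_ring_family_def additive_def linear_iff
  by blast

theorem proposition3p17:
  fixes scale :: "'k::field \<Rightarrow> 'a::ring \<Rightarrow> 'a"
    and N :: "'w::semigroup_mult \<Rightarrow> 'a \<Rightarrow> 'a"
  assumes "assoc_algebra scale"
    and "nijenhuis_family scale N"
  shows "NS_family_algebra scale
           (\<lambda>\<alpha> a b. a * N \<alpha> b)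
           (\<lambda>\<alpha> a b. N \<alpha> a * b)
           (\<lambda>\<alpha> \<beta> a b. - N (\<alpha> * \<beta>) (a * b))"
proof -
  interpret nijenhuis_ring_family N
    using assms(2) by (rule nijenhuis_family_imp_nijenhuis_ring_family)
  have mult: "bilinear_map scale (*)"
    using assms(1) by (rule assoc_algebra_bilinear_mult)
  have linear_N: "Vector_Spaces.linear scale scale (N \<alpha>)" for \<alpha>
    using assms(2) unfolding nijenhuis_family_def by blast
  have "Vector_Spaces.vector_space scale"
    using assms(1) unfolding assoc_algebra_def by blast
  moreover have "bilinear_map scale (\<lambda>a b. a * N \<alpha> b)" for \<alpha>
    using mult linear_N by (rule bilinear_map_compose_right)
  moreover have "bilinear_map scale (\<lambda>a b. N \<alpha> a * b)" for \<alpha>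
    using mult linear_N by (rule bilinear_map_compose_left)
  moreover have "bilinear_map scale (\<lambda>a b. - N (\<alpha> * \<beta>) (a * b))" for \<alpha> \<beta>
    using linear_uminus_compose[OF linear_N] mult by (rule bilinear_map_compose_outer)
  ultimately show ?thesis
    unfolding NS_family_algebra_def
    using NS_prec_prec NS_succ_succ NS_curly by (simp add: mult.assoc)
qed

end
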